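(* In a combinatorial auction as described in the context, the VCG payments can be linearized to PME prices — i.e. there exist finitely many valid cuts and a price vector $p$ on original and artificial items such that $(x^*,p)$ is a price-match equilibrium of the augmented auction with $p\,a^{i*}=\rho^{VCG}_i$ for every bidder $i$ — if and only if the VCG payment vector is a minimum-revenue core-selecting (MRC) payment vector.
   Context: Combinatorial auction: item types $j\in\mathcal J$ with supply $c_j\in\mathbb Z_{\ge1}$ (vector $c$); bidders $\mathcal I$; finite set of bids $\mathcal K$, bid $k$ made by bidder $i(k)$ with bundle $a^k\in\mathbb Z^J_{\ge0}$, $a^k\le c$, amount $b_k\ge0$; $\mathcal K_i$ = bids of bidder $i$; bids taken truthful. $\bm A$ = matrix with columns $a^k$, $\bm B$ with $\bm B_{i,k}=1$ iff $k\in\mathcal K_i$. Feasible allocation: $x\in\{0,1\}^K$, $\bm Ax\le c$, $\bm Bx\le\bm 1$. $w(\mathcal C,c',\cdot)$ = maximum total bid amount over feasible allocations with supply $c'$ using only bids of bidders in $\mathcal C$. $x^*$ efficient allocation; $a^{i*},b_{i*}$ bundle and amount of $i$'s accepted bid ($\bm 0,0$ if none). VCG payments: $\rho^{VCG}_i=w(\mathcal I\setminus i,c,\mathcal K)-w(\mathcal I\setminus i,c-a^{i*},\mathcal K)$. A payment vector $\rho$ ($\rho_i=0$ for non-winners) is core-selecting at $x^*$ if $\rho_i\le b_{i*}$ for all $i$ and $\sum_{i\in\mathcal C}(b_{i*}-\rho_i)+\sum_{i\in\mathcal I}\rho_i\ge w(\mathcal C,c,\mathcal K^{\mathcal C})$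 for all $\mathcal C\subseteq\mathcal I$ ($\mathcal K^{\mathcal C}$ = bids of bidders in $\mathcal C$); MRC if it minimizes $\sum_i\rho_i$ among core-selecting vectors. A Walrasian equilibrium (WE) is $(x^*,p)$, $p\ge0$, with $s_i=b_{i*}-p\,a^{i*}\ge0$, $p\,a^k+s_{i(k)}\ge b_k$ for all $k$, and $p_j=0$ for items in excess supply under $x^*$. A WE is a price-match equilibrium (PME) if for every bidder $i$ there is a feasible allocation $x^{-i}$ with $x^{-i}_k=0$ for $k\in\mathcal K_i$, $p\,a^k\le b_k$ whenever $x^{-i}_k=1$, and $p\bm Ax^{-i}=p\bm Ax^*$. A valid cut is $(\alpha,\alpha_0)$, $\alpha\in\mathbb R^K_{\ge0}$, with $\alpha x\le\alpha_0$ for all feasible $x$ and $\alpha x^*=\alpha_0$; it is added as an artificial item by appending row $\alpha$ to $\bm A$ with supply $\alpha_0$, and WE/PME in the augmented auction treat it like an original item. *)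

theory Defs
  imports Complex_Main
begin

text \<open>Bidders have type 'i (set I), items type 'j (set J),
bids type 'k (set K). bidder k is the bidder i(k) of bid k, a k j is the
quantity of item j in the bundle of bid k, b k the amount, c j the supply.
An allocation x in {0,1}^K is represented by the set of accepted bids.\<close>

definition feasible ::
  "'j set \<Rightarrow> 'k set \<Rightarrow> ('k \<Rightarrow> 'j \<Rightarrow> nat) \<Rightarrow> ('k \<Rightarrow> 'i) \<Rightarrow> ('j \<Rightarrow> nat) \<Rightarrow> 'k set \<Rightarrow> bool" where
  "feasible J K a bidder c' x \<longleftrightarrow>
     x \<subseteq> K \<and> (\<forall>j\<in>J. (\<Sum>k\<in>x. a k j) \<le> c' j) \<and>
     (\<forall>k\<in>x. \<forall>k'\<in>x. bidder k = bidder k' \<longrightarrow> k = k')"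

definition wval ::
  "'j set \<Rightarrow> 'k set \<Rightarrow> ('k \<Rightarrow> 'j \<Rightarrow> nat) \<Rightarrow> ('k \<Rightarrow> 'i) \<Rightarrow> ('k \<Rightarrow> real) \<Rightarrow> 'i set \<Rightarrow> ('j \<Rightarrow> nat) \<Rightarrow> real" where
  "wval J K a bidder b C c' =
     Max {(\<Sum>k\<in>x. b k) | x. feasible J K a bidder c' x \<and> (\<forall>k\<in>x. bidder k \<in> C)}"

text \<open>a^{i*} and b_{i*}: bundle and amount of i's accepted bid under xs (zero if none).\<close>
definition win_bundle :: "('k \<Rightarrow> 'j \<Rightarrow> nat) \<Rightarrow> ('k \<Rightarrow> 'i) \<Rightarrow> 'k set \<Rightarrow> 'i \<Rightarrow> 'j \<Rightarrow> nat" where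
  "win_bundle a bidder xs i j = (\<Sum>k\<in>{k\<in>xs. bidder k = i}. a k j)"

definition win_amount :: "('k \<Rightarrow> real) \<Rightarrow> ('k \<Rightarrow> 'i) \<Rightarrow> 'k set \<Rightarrow> 'i \<Rightarrow> real" where
  "win_amount b bidder xs i = (\<Sum>k\<in>{k\<in>xs. bidder k = i}. b k)"

definition is_winner :: "('k \<Rightarrow> 'i) \<Rightarrow> 'k set \<Rightarrow> 'i \<Rightarrow> bool" where
  "is_winner bidder xs i \<longleftrightarrow> (\<exists>k\<in>xs. bidder k = i)"

definition vcg ::
  "'i set \<Rightarrow> 'j set \<Rightarrow> 'k set \<Rightarrow> ('j \<Rightarrow> nat) \<Rightarrow> ('k \<Rightarrow> 'j \<Rightarrow> nat) \<Rightarrow> ('k \<Rightarrow> 'i) \<Rightarrow> ('k \<Rightarrow> real)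
   \<Rightarrow> 'k set \<Rightarrow> 'i \<Rightarrow> real" where
  "vcg I J K c a bidder b xs i =
     wval J K a bidder b (I - {i}) c
     - wval J K a bidder b (I - {i}) (\<lambda>j. c j - win_bundle a bidder xs i j)"

definition core_selecting ::
  "'i set \<Rightarrow> 'j set \<Rightarrow> 'k set \<Rightarrow> ('j \<Rightarrow> nat) \<Rightarrow> ('k \<Rightarrow> 'j \<Rightarrow> nat) \<Rightarrow> ('k \<Rightarrow> 'i) \<Rightarrow> ('k \<Rightarrow> real)
   \<Rightarrow> 'k set \<Rightarrow> ('i \<Rightarrow> real) \<Rightarrow> bool" where
  "core_selecting I J K c a bidder b xs \<rho> \<longleftrightarrow>
     (\<forall>i\<in>I. \<not> is_winner bidder xs i \<longrightarrow> \<rho> i = 0) \<and>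
     (\<forall>i\<in>I. \<rho> i \<le> win_amount b bidder xs i) \<and>
     (\<forall>C. C \<subseteq> I \<longrightarrow>
        (\<Sum>i\<in>C. win_amount b bidder xs i - \<rho> i) + (\<Sum>i\<in>I. \<rho> i) \<ge> wval J K a bidder b C c)"

definition mrc ::
  "'i set \<Rightarrow> 'j set \<Rightarrow> 'k set \<Rightarrow> ('j \<Rightarrow> nat) \<Rightarrow> ('k \<Rightarrow> 'j \<Rightarrow> nat) \<Rightarrow> ('k \<Rightarrow> 'i) \<Rightarrow> ('k \<Rightarrow> real)
   \<Rightarrow> 'k set \<Rightarrow> ('i \<Rightarrow> real) \<Rightarrow> bool" where
  "mrc I J K c a bidder b xs \<rho> \<longleftrightarrow>
     core_selecting I J K c a bidder b xs \<rho> \<and>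
     (\<forall>\<rho>'. core_selecting I J K c a bidder b xs \<rho>' \<longrightarrow> (\<Sum>i\<in>I. \<rho> i) \<le> (\<Sum>i\<in>I. \<rho>' i))"

definition valid_cut ::
  "'j set \<Rightarrow> 'k set \<Rightarrow> ('j \<Rightarrow> nat) \<Rightarrow> ('k \<Rightarrow> 'j \<Rightarrow> nat) \<Rightarrow> ('k \<Rightarrow> 'i) \<Rightarrow> 'k set
   \<Rightarrow> ('k \<Rightarrow> real) \<Rightarrow> real \<Rightarrow> bool" where
  "valid_cut J K c a bidder xs \<alpha> \<alpha>0 \<longleftrightarrow>
     (\<forall>k\<in>K. \<alpha> k \<ge> 0) \<and>
     (\<forall>x. feasible J K a bidder c x \<longrightarrow> (\<Sum>k\<in>x. \<alpha> k) \<le> \<alpha>0) \<and>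
     (\<Sum>k\<in>xs. \<alpha> k) = \<alpha>0"

text \<open>Augmented auction: each cut is an extra item with row alpha and supply alpha0.\<close>
definition aug_feasible ::
  "'j set \<Rightarrow> 'k set \<Rightarrow> ('j \<Rightarrow> nat) \<Rightarrow> ('k \<Rightarrow> 'j \<Rightarrow> nat) \<Rightarrow> ('k \<Rightarrow> 'i)
   \<Rightarrow> (('k \<Rightarrow> real) \<times> real) list \<Rightarrow> 'k set \<Rightarrow> bool" where
  "aug_feasible J K c a bidder cuts x \<longleftrightarrow>
     feasible J K a bidder c x \<and>
     (\<forall>l<length cuts. (\<Sum>k\<in>x. fst (cuts ! l) k) \<le> snd (cuts ! l))"

text \<open>Price of the (augmented) bundle of bid k under prices p (original items)
and q (artificial items, indexed by position in the cut list).\<close>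
definition bid_price ::
  "'j set \<Rightarrow> ('k \<Rightarrow> 'j \<Rightarrow> nat) \<Rightarrow> (('k \<Rightarrow> real) \<times> real) list \<Rightarrow> ('j \<Rightarrow> real) \<Rightarrow> (nat \<Rightarrow> real)
   \<Rightarrow> 'k \<Rightarrow> real" where
  "bid_price J a cuts p q k =
     (\<Sum>j\<in>J. p j * real (a k j)) + (\<Sum>l<length cuts. q l * fst (cuts ! l) k)"

text \<open>p a^{i*} in the augmented auction.\<close>
definition win_price ::
  "'j set \<Rightarrow> ('k \<Rightarrow> 'j \<Rightarrow> nat) \<Rightarrow> ('k \<Rightarrow> 'i) \<Rightarrow> (('k \<Rightarrow> real) \<times> real) list \<Rightarrow> 'k set
   \<Rightarrow> ('j \<Rightarrow> real) \<Rightarrow> (nat \<Rightarrow> real) \<Rightarrow> 'i \<Rightarrow> real" where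
  "win_price J a bidder cuts xs p q i = (\<Sum>k\<in>{k\<in>xs. bidder k = i}. bid_price J a cuts p q k)"

definition walrasian ::
  "'i set \<Rightarrow> 'j set \<Rightarrow> 'k set \<Rightarrow> ('j \<Rightarrow> nat) \<Rightarrow> ('k \<Rightarrow> 'j \<Rightarrow> nat) \<Rightarrow> ('k \<Rightarrow> 'i) \<Rightarrow> ('k \<Rightarrow> real)
   \<Rightarrow> (('k \<Rightarrow> real) \<times> real) list \<Rightarrow> 'k set \<Rightarrow> ('j \<Rightarrow> real) \<Rightarrow> (nat \<Rightarrow> real) \<Rightarrow> bool" where
  "walrasian I J K c a bidder b cuts xs p q \<longleftrightarrow>
     (let s = (\<lambda>i. win_amount b bidder xs i - win_price J a bidder cuts xs p q i) in
       (\<forall>j\<in>J. p j \<ge> 0) \<and> (\<forall>l<length cuts. q l \<ge> 0) \<and>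
       (\<forall>i\<in>I. s i \<ge> 0) \<and>
       (\<forall>k\<in>K. bid_price J a cuts p q k + s (bidder k) \<ge> b k) \<and>
       (\<forall>j\<in>J. (\<Sum>k\<in>xs. a k j) < c j \<longrightarrow> p j = 0) \<and>
       (\<forall>l<length cuts. (\<Sum>k\<in>xs. fst (cuts ! l) k) < snd (cuts ! l) \<longrightarrow> q l = 0))"

definition pme ::
  "'i set \<Rightarrow> 'j set \<Rightarrow> 'k set \<Rightarrow> ('j \<Rightarrow> nat) \<Rightarrow> ('k \<Rightarrow> 'j \<Rightarrow> nat) \<Rightarrow> ('k \<Rightarrow> 'i) \<Rightarrow> ('k \<Rightarrow> real)
   \<Rightarrow> (('k \<Rightarrow> real) \<times> real) list \<Rightarrow> 'k set \<Rightarrow> ('j \<Rightarrow> real) \<Rightarrow> (nat \<Rightarrow> real) \<Rightarrow> bool" where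
  "pme I J K c a bidder b cuts xs p q \<longleftrightarrow>
     walrasian I J K c a bidder b cuts xs p q \<and>
     (\<forall>i\<in>I. \<exists>x. aug_feasible J K c a bidder cuts x \<and>
        (\<forall>k\<in>x. bidder k \<noteq> i) \<and>
        (\<forall>k\<in>x. bid_price J a cuts p q k \<le> b k) \<and>
        (\<Sum>k\<in>x. bid_price J a cuts p q k) = (\<Sum>k\<in>xs. bid_price J a cuts p q k))"

end

theory Submission
  imports Defs
begin

(* VCG payments bound every core-selecting payment vector from below: the core constraint of
   the coalition I - {i} forces rho_i >= vcg_i.  Hence VCG is MRC iff it is core-selecting.
   If (x*, p) is a Walrasian equilibrium of an auction augmented by valid cuts, then x*
   maximizes the price p A x over all feasible x, and every bid is covered by its price plus
   the surplus of its bidder; summing over an optimal allocation of a coalition gives its core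
   constraint for the payments p a^{i*}.  Conversely, for core-selecting payments rho the
   single cut alpha_k = max(0, b_k - s_{i(k)}), with s_i = b_{i*} - rho_i, is valid by the
   core constraints, and pricing it at 1 and all items at 0 supports x* as a Walrasian
   equilibrium with payments rho.  For VCG payments the core constraint of I - {i} is tight,
   so an efficient allocation of I - {i} exhausts the cut: this is price matching. *)

lemma feasible_subset_bids: "feasible J K a bidder c' x \<Longrightarrow> x \<subseteq> K"
  by (simp add: feasible_def)

lemma feasible_mono_supply:
  "feasible J K a bidder c1 x \<Longrightarrow> \<forall>j\<in>J. c1 j \<le> c2 j \<Longrightarrow> feasible J K a bidder c2 x"
  unfolding feasible_def by (blast intro: order_trans)

lemma inj_on_bidder_feasible: "feasible J K a bidder c' x \<Longrightarrow> inj_on bidder x"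
  unfolding feasible_def inj_on_def by blast

lemma feasible_bids_of_bidder:
  "feasible J K a bidder c' x \<Longrightarrow> k \<in> x \<Longrightarrow> {k'\<in>x. bidder k' = bidder k} = {k}"
  unfolding feasible_def by auto

lemma sum_by_bidder:
  assumes "finite x" "finite C" "bidder ` x \<subseteq> C"
  shows "(\<Sum>i\<in>C. \<Sum>k\<in>{k\<in>x. bidder k = i}. f k) = (\<Sum>k\<in>x. f k)"
  using sum.group[OF assms] .

locale auction =
  fixes I :: "'i set" and J :: "'j set" and K :: "'k set"
    and c :: "'j \<Rightarrow> nat" and a :: "'k \<Rightarrow> 'j \<Rightarrow> nat" and bidder :: "'k \<Rightarrow> 'i"
    and b :: "'k \<Rightarrow> real"
  assumes finite_bidders: "finite I" and finite_bids: "finite K"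
    and bidder_in_bidders: "k \<in> K \<Longrightarrow> bidder k \<in> I"
begin

lemma finite_feasible: "feasible J K a bidder c' x \<Longrightarrow> finite x"
  using finite_subset[OF feasible_subset_bids finite_bids] .

lemma feasible_subset:
  assumes "feasible J K a bidder c' x" "y \<subseteq> x"
  shows "feasible J K a bidder c' y"
  using assms sum_mono2[OF finite_feasible[OF assms(1)] assms(2)]
  unfolding feasible_def by (blast intro: order_trans)

lemma sum_over_bidders_le:
  fixes g :: "'i \<Rightarrow> 'a::ordered_comm_monoid_add"
  assumes "feasible J K a bidder c' x" "bidder ` x \<subseteq> C" "C \<subseteq> I" "\<forall>i\<in>C. 0 \<le> g i"
  shows "(\<Sum>k\<in>x. g (bidder k)) \<le> (\<Sum>i\<in>C. g i)"
proof -
  have "(\<Sum>k\<in>x. g (bidder k)) = (\<Sum>i\<in>bidder ` x. g i)"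
    by (simp add: sum.reindex[OF inj_on_bidder_feasible[OF assms(1)]])
  also have "\<dots> \<le> (\<Sum>i\<in>C. g i)"
    using assms(2-4) finite_subset[OF assms(3) finite_bidders] by (intro sum_mono2) auto
  finally show ?thesis .
qed

lemma finite_wval_candidates:
  "finite {(\<Sum>k\<in>x. b k) | x. feasible J K a bidder c' x \<and> (\<forall>k\<in>x. bidder k \<in> C)}"
proof (rule finite_subset)
  show "{(\<Sum>k\<in>x. b k) | x. feasible J K a bidder c' x \<and> (\<forall>k\<in>x. bidder k \<in> C)}
        \<subseteq> (\<lambda>x. \<Sum>k\<in>x. b k) ` Pow K"
    by (auto simp: feasible_def)
qed (simp add: finite_bids)

lemma wval_ge:
  "feasible J K a bidder c' x \<Longrightarrow> \<forall>k\<in>x. bidder k \<in> C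
     \<Longrightarrow> (\<Sum>k\<in>x. b k) \<le> wval J K a bidder b C c'"
  unfolding wval_def by (rule Max_ge[OF finite_wval_candidates]) blast

lemma wval_attained:
  obtains x where "feasible J K a bidder c' x" "\<forall>k\<in>x. bidder k \<in> C"
    "(\<Sum>k\<in>x. b k) = wval J K a bidder b C c'"
proof -
  have "feasible J K a bidder c' {}"
    by (simp add: feasible_def)
  then have "wval J K a bidder b C c'
      \<in> {(\<Sum>k\<in>x. b k) | x. feasible J K a bidder c' x \<and> (\<forall>k\<in>x. bidder k \<in> C)}"
    unfolding wval_def by (intro Max_in[OF finite_wval_candidates]) blast
  then show thesis using that by force
qed

lemma wval_mono_supply:
  assumes "\<forall>j\<in>J. c1 j \<le> c2 j"
  shows "wval J K a bidder b C c1 \<le> wval J K a bidder b C c2"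
proof -
  obtain x where "feasible J K a bidder c1 x" "\<forall>k\<in>x. bidder k \<in> C"
    "(\<Sum>k\<in>x. b k) = wval J K a bidder b C c1"
    by (rule wval_attained)
  with wval_ge[OF feasible_mono_supply[OF _ assms]] show ?thesis by fastforce
qed

lemma vcg_nonneg: "0 \<le> vcg I J K c a bidder b xs i"
  unfolding vcg_def using wval_mono_supply[of "\<lambda>j. c j - win_bundle a bidder xs i j" c] by simp

end

section \<open>VCG payments and the core\<close>

locale auction_outcome = auction +
  fixes xs :: "'k set"
  assumes feasible_outcome: "feasible J K a bidder c xs"
begin

lemma finite_outcome: "finite xs"
  using finite_feasible[OF feasible_outcome] .

lemma winners_in_bidders: "bidder ` xs \<subseteq> I"
  using feasible_subset_bids[OF feasible_outcome] bidder_in_bidders by blast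

lemma win_amount_of_winning_bid: "k \<in> xs \<Longrightarrow> win_amount b bidder xs (bidder k) = b k"
  unfolding win_amount_def using feasible_bids_of_bidder[OF feasible_outcome] by simp

lemma sum_win_amount_others_le:
  "(\<Sum>i'\<in>I - {i}. win_amount b bidder xs i')
     \<le> wval J K a bidder b (I - {i}) (\<lambda>j. c j - win_bundle a bidder xs i j)"
proof -
  define others where "others = {k\<in>xs. bidder k \<noteq> i}"
  have "feasible J K a bidder (\<lambda>j. c j - win_bundle a bidder xs i j) others"
    unfolding feasible_def
  proof (intro conjI ballI impI)
    show "others \<subseteq> K"
      using feasible_subset_bids[OF feasible_outcome] others_def by blast
  next
    fix j assume "j \<in> J"
    have "(\<Sum>k\<in>xs. a k j) = (\<Sum>k\<in>others. a k j) + win_bundle a bidder xs i j"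
      unfolding win_bundle_def others_def using finite_outcome
      by (subst sum.union_disjoint[symmetric]) (auto intro: sum.cong)
    moreover have "(\<Sum>k\<in>xs. a k j) \<le> c j"
      using feasible_outcome \<open>j \<in> J\<close> by (simp add: feasible_def)
    ultimately show "(\<Sum>k\<in>others. a k j) \<le> c j - win_bundle a bidder xs i j"
      by linarith
  next
    fix k k' assume "k \<in> others" "k' \<in> others" "bidder k = bidder k'"
    then show "k = k'"
      using feasible_outcome unfolding feasible_def others_def by blast
  qed
  then have "(\<Sum>k\<in>others. b k)
      \<le> wval J K a bidder b (I - {i}) (\<lambda>j. c j - win_bundle a bidder xs i j)"
    using winners_in_bidders by (intro wval_ge) (auto simp: others_def)
  moreover have "(\<Sum>i'\<in>I - {i}. win_amount b bidder xs i') = (\<Sum>k\<in>others. b k)"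
  proof -
    have "(\<Sum>i'\<in>I - {i}. win_amount b bidder xs i')
        = (\<Sum>i'\<in>I - {i}. \<Sum>k\<in>{k\<in>others. bidder k = i'}. b k)"
      unfolding win_amount_def others_def by (intro sum.cong) auto
    also have "\<dots> = (\<Sum>k\<in>others. b k)"
      using finite_outcome finite_bidders winners_in_bidders
      by (intro sum_by_bidder) (auto simp: others_def)
    finally show ?thesis .
  qed
  ultimately show ?thesis by simp
qed

lemma vcg_le_core_bound:
  "vcg I J K c a bidder b xs i
     \<le> wval J K a bidder b (I - {i}) c - (\<Sum>i'\<in>I - {i}. win_amount b bidder xs i')"
  using sum_win_amount_others_le[of i] unfolding vcg_def by linarith

lemma core_selecting_ge_vcg:
  assumes "core_selecting I J K c a bidder b xs \<rho>" "i \<in> I"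
  shows "vcg I J K c a bidder b xs i \<le> \<rho> i"
proof -
  have "wval J K a bidder b (I - {i}) c
      \<le> (\<Sum>i'\<in>I - {i}. win_amount b bidder xs i' - \<rho> i') + (\<Sum>i'\<in>I. \<rho> i')"
    using assms(1) unfolding core_selecting_def by blast
  also have "\<dots> = (\<Sum>i'\<in>I - {i}. win_amount b bidder xs i') + \<rho> i"
    using sum.remove[OF finite_bidders assms(2), of \<rho>] by (simp add: sum_subtractf)
  finally show ?thesis
    using vcg_le_core_bound[of i] by linarith
qed

lemma mrc_vcg_iff_core_selecting:
  "mrc I J K c a bidder b xs (vcg I J K c a bidder b xs)
     \<longleftrightarrow> core_selecting I J K c a bidder b xs (vcg I J K c a bidder b xs)"
  unfolding mrc_def using core_selecting_ge_vcg by (auto intro: sum_mono)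

end

section \<open>Walrasian prices in an augmented auction\<close>

lemma sum_bid_price:
  "(\<Sum>k\<in>x. bid_price J a cuts p q k) =
     (\<Sum>j\<in>J. p j * real (\<Sum>k\<in>x. a k j)) + (\<Sum>l<length cuts. q l * (\<Sum>k\<in>x. fst (cuts ! l) k))"
  unfolding bid_price_def sum.distrib
  by (subst (1 2) sum.swap) (simp add: sum_distrib_left)

lemma bid_price_single_cut: "bid_price J a [(\<alpha>, \<alpha>0)] (\<lambda>_. 0) (\<lambda>_. 1) = \<alpha>"
  by (simp add: bid_price_def fun_eq_iff)

lemma win_price_non_winner:
  "\<not> is_winner bidder xs i \<Longrightarrow> win_price J a bidder cuts xs p q i = 0"
proof -
  assume "\<not> is_winner bidder xs i"
  then have "{k\<in>xs. bidder k = i} = {}"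
    unfolding is_winner_def by blast
  then show ?thesis
    unfolding win_price_def by (simp only: sum.empty)
qed

definition pme_linearizable ::
  "'i set \<Rightarrow> 'j set \<Rightarrow> 'k set \<Rightarrow> ('j \<Rightarrow> nat) \<Rightarrow> ('k \<Rightarrow> 'j \<Rightarrow> nat) \<Rightarrow> ('k \<Rightarrow> 'i) \<Rightarrow> ('k \<Rightarrow> real)
   \<Rightarrow> 'k set \<Rightarrow> ('i \<Rightarrow> real) \<Rightarrow> bool" where
  "pme_linearizable I J K c a bidder b xs \<rho> \<longleftrightarrow>
     (\<exists>cuts p q.
        (\<forall>l<length cuts. valid_cut J K c a bidder xs (fst (cuts ! l)) (snd (cuts ! l))) \<and>
        pme I J K c a bidder b cuts xs p q \<and>
        (\<forall>i\<in>I. win_price J a bidder cuts xs p q i = \<rho> i))"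

context auction_outcome
begin

lemma sum_win_price:
  "(\<Sum>i\<in>I. win_price J a bidder cuts xs p q i) = (\<Sum>k\<in>xs. bid_price J a cuts p q k)"
  unfolding win_price_def using finite_outcome finite_bidders winners_in_bidders by (rule sum_by_bidder)

lemma walrasian_sum_bid_price_le:
  assumes "walrasian I J K c a bidder b cuts xs p q"
    and "\<forall>l<length cuts. valid_cut J K c a bidder xs (fst (cuts ! l)) (snd (cuts ! l))"
    and "feasible J K a bidder c x"
  shows "(\<Sum>k\<in>x. bid_price J a cuts p q k) \<le> (\<Sum>k\<in>xs. bid_price J a cuts p q k)"
proof -
  have items: "p j * real (\<Sum>k\<in>x. a k j) \<le> p j * real (\<Sum>k\<in>xs. a k j)" if "j \<in> J" for j
  proof (cases "(\<Sum>k\<in>xs. a k j) < c j")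
    case True
    then show ?thesis using assms(1) \<open>j \<in> J\<close> by (simp add: walrasian_def)
  next
    case False
    moreover have "(\<Sum>k\<in>x. a k j) \<le> c j" "(\<Sum>k\<in>xs. a k j) \<le> c j"
      using assms(3) feasible_outcome \<open>j \<in> J\<close> by (simp_all add: feasible_def)
    ultimately have "(\<Sum>k\<in>x. a k j) \<le> (\<Sum>k\<in>xs. a k j)"
      by linarith
    moreover have "0 \<le> p j" using assms(1) \<open>j \<in> J\<close> by (simp add: walrasian_def)
    ultimately show ?thesis by (simp add: mult_left_mono del: of_nat_sum)
  qed
  have cuts: "q l * (\<Sum>k\<in>x. fst (cuts ! l) k) \<le> q l * (\<Sum>k\<in>xs. fst (cuts ! l) k)"
    if "l < length cuts" for l
  proof -
    have "(\<Sum>k\<in>x. fst (cuts ! l) k) \<le> (\<Sum>k\<in>xs. fst (cuts ! l) k)"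
      using assms(2,3) that unfolding valid_cut_def by metis
    moreover have "0 \<le> q l" using assms(1) that by (simp add: walrasian_def)
    ultimately show ?thesis by (simp add: mult_left_mono)
  qed
  show ?thesis
    unfolding sum_bid_price using items cuts by (intro add_mono sum_mono) auto
qed

lemma walrasian_core_selecting:
  assumes walrasian: "walrasian I J K c a bidder b cuts xs p q"
    and valid: "\<forall>l<length cuts. valid_cut J K c a bidder xs (fst (cuts ! l)) (snd (cuts ! l))"
    and payments: "\<forall>i\<in>I. win_price J a bidder cuts xs p q i = \<rho> i"
  shows "core_selecting I J K c a bidder b xs \<rho>"
proof -
  define \<pi> where "\<pi> = bid_price J a cuts p q"
  define s where "s i = win_amount b bidder xs i - \<rho> i" for i
  have s_nonneg: "\<forall>i\<in>I. 0 \<le> s i"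
    using walrasian payments unfolding walrasian_def Let_def s_def by auto
  have covered: "b k \<le> \<pi> k + s (bidder k)" if "k \<in> K" for k
    using walrasian payments bidder_in_bidders[OF that] that
    unfolding walrasian_def Let_def s_def \<pi>_def by auto
  have revenue: "(\<Sum>k\<in>xs. \<pi> k) = (\<Sum>i\<in>I. \<rho> i)"
    using payments unfolding \<pi>_def sum_win_price[symmetric] by simp
  have "wval J K a bidder b C c \<le> (\<Sum>i\<in>C. s i) + (\<Sum>i\<in>I. \<rho> i)" if "C \<subseteq> I" for C
  proof -
    obtain x where x: "feasible J K a bidder c x" "\<forall>k\<in>x. bidder k \<in> C"
      and opt: "(\<Sum>k\<in>x. b k) = wval J K a bidder b C c"
      by (rule wval_attained)
    have "(\<Sum>k\<in>x. b k) \<le> (\<Sum>k\<in>x. \<pi> k) + (\<Sum>k\<in>x. s (bidder k))"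
      unfolding sum.distrib[symmetric]
      using covered feasible_subset_bids[OF x(1)] by (intro sum_mono) auto
    also have "\<dots> \<le> (\<Sum>i\<in>I. \<rho> i) + (\<Sum>i\<in>C. s i)"
      using walrasian_sum_bid_price_le[OF walrasian valid x(1)] revenue
        sum_over_bidders_le[OF x(1), of C s] x(2) that s_nonneg
      unfolding \<pi>_def by (intro add_mono) auto
    finally show ?thesis using opt by simp
  qed
  moreover have "\<rho> i = 0" if "i \<in> I" "\<not> is_winner bidder xs i" for i
    using payments that win_price_non_winner by metis
  ultimately show ?thesis
    using s_nonneg unfolding core_selecting_def s_def by auto
qed

end

section \<open>Linearizing core-selecting payments by a single cut\<close>

(* b_k minus the surplus b_{i*} - rho_i that its bidder keeps, clipped at 0: the least
   nonnegative price at which bid k is covered by its price plus that surplus. *)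
definition core_cut ::
  "('k \<Rightarrow> real) \<Rightarrow> ('k \<Rightarrow> 'i) \<Rightarrow> 'k set \<Rightarrow> ('i \<Rightarrow> real) \<Rightarrow> 'k \<Rightarrow> real" where
  "core_cut b bidder xs \<rho> k = max 0 (b k - (win_amount b bidder xs (bidder k) - \<rho> (bidder k)))"

context auction_outcome
begin

context
  fixes \<rho>
  assumes core: "core_selecting I J K c a bidder b xs \<rho>"
    and payments_nonneg: "\<forall>i\<in>I. 0 \<le> \<rho> i"
begin

abbreviation core_cuts where
  "core_cuts \<equiv> [(core_cut b bidder xs \<rho>, \<Sum>i\<in>I. \<rho> i)]"

lemma surplus_nonneg: "i \<in> I \<Longrightarrow> 0 \<le> win_amount b bidder xs i - \<rho> i"
  using core unfolding core_selecting_def by (meson diff_ge_0_iff_ge)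

lemma core_cut_winning_bid: "k \<in> xs \<Longrightarrow> core_cut b bidder xs \<rho> k = \<rho> (bidder k)"
  using payments_nonneg winners_in_bidders
  unfolding core_cut_def by (auto simp: win_amount_of_winning_bid)

lemma sum_core_cut_bids_of:
  assumes "i \<in> I"
  shows "(\<Sum>k\<in>{k\<in>xs. bidder k = i}. core_cut b bidder xs \<rho> k) = \<rho> i"
proof (cases "is_winner bidder xs i")
  case True
  then obtain k where "k \<in> xs" "bidder k = i"
    unfolding is_winner_def by blast
  then show ?thesis
    using feasible_bids_of_bidder[OF feasible_outcome] core_cut_winning_bid by auto
next
  case False
  then have "{k\<in>xs. bidder k = i} = {}"
    unfolding is_winner_def by blast
  moreover have "\<rho> i = 0"
    using False assms core unfolding core_selecting_def by blast
  ultimately show ?thesis by (simp only: sum.empty)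
qed

lemma sum_core_cut_outcome: "(\<Sum>k\<in>xs. core_cut b bidder xs \<rho> k) = (\<Sum>i\<in>I. \<rho> i)"
proof -
  have "(\<Sum>k\<in>xs. core_cut b bidder xs \<rho> k)
      = (\<Sum>i\<in>I. \<Sum>k\<in>{k\<in>xs. bidder k = i}. core_cut b bidder xs \<rho> k)"
    by (rule sum_by_bidder[OF finite_outcome finite_bidders winners_in_bidders, symmetric])
  also have "\<dots> = (\<Sum>i\<in>I. \<rho> i)"
    by (rule sum.cong[OF refl sum_core_cut_bids_of])
  finally show ?thesis .
qed

lemma sum_core_cut_le:
  assumes "feasible J K a bidder c x"
  shows "(\<Sum>k\<in>x. core_cut b bidder xs \<rho> k) \<le> (\<Sum>i\<in>I. \<rho> i)"
proof -
  define s where "s i = win_amount b bidder xs i - \<rho> i" for i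
  define x' where "x' = {k\<in>x. 0 \<le> b k - s (bidder k)}"
  have x': "feasible J K a bidder c x'"
    using assms by (rule feasible_subset) (simp add: x'_def)
  have coalition: "bidder ` x' \<subseteq> I"
    using feasible_subset_bids[OF x'] bidder_in_bidders by blast
  have "(\<Sum>k\<in>x. core_cut b bidder xs \<rho> k) = (\<Sum>k\<in>x'. b k - s (bidder k))"
    unfolding x'_def sum.inter_filter[OF finite_feasible[OF assms]]
    by (intro sum.cong) (simp_all add: core_cut_def s_def)
  also have "\<dots> = (\<Sum>k\<in>x'. b k) - (\<Sum>i\<in>bidder ` x'. s i)"
    by (simp add: sum_subtractf sum.reindex[OF inj_on_bidder_feasible[OF x']])
  also have "(\<Sum>k\<in>x'. b k) \<le> wval J K a bidder b (bidder ` x') c"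
    using x' by (rule wval_ge) simp
  also have "\<dots> \<le> (\<Sum>i\<in>bidder ` x'. s i) + (\<Sum>i\<in>I. \<rho> i)"
    using core coalition unfolding core_selecting_def s_def by blast
  finally show ?thesis by simp
qed

lemma sum_core_cut_ge:
  assumes "feasible J K a bidder c y" "bidder ` y \<subseteq> C" "C \<subseteq> I"
  shows "(\<Sum>k\<in>y. b k) - (\<Sum>i\<in>C. win_amount b bidder xs i - \<rho> i)
           \<le> (\<Sum>k\<in>y. core_cut b bidder xs \<rho> k)"
proof -
  have "(\<Sum>k\<in>y. win_amount b bidder xs (bidder k) - \<rho> (bidder k))
      \<le> (\<Sum>i\<in>C. win_amount b bidder xs i - \<rho> i)"
    using assms surplus_nonneg by (intro sum_over_bidders_le) auto
  moreover have "(\<Sum>k\<in>y. b k - (win_amount b bidder xs (bidder k) - \<rho> (bidder k)))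
      \<le> (\<Sum>k\<in>y. core_cut b bidder xs \<rho> k)"
    unfolding core_cut_def by (intro sum_mono) simp
  ultimately show ?thesis
    by (simp add: sum_subtractf)
qed

lemma core_cut_valid: "valid_cut J K c a bidder xs (core_cut b bidder xs \<rho>) (\<Sum>i\<in>I. \<rho> i)"
  unfolding valid_cut_def
  using sum_core_cut_le sum_core_cut_outcome by (simp add: core_cut_def)

lemma win_price_core_cut:
  "i \<in> I \<Longrightarrow> win_price J a bidder core_cuts xs (\<lambda>_. 0) (\<lambda>_. 1) i = \<rho> i"
  unfolding win_price_def bid_price_single_cut by (rule sum_core_cut_bids_of)

lemma core_cut_walrasian:
  "walrasian I J K c a bidder b core_cuts xs (\<lambda>_. 0) (\<lambda>_. 1)"
  unfolding walrasian_def Let_def bid_price_single_cut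
proof (intro conjI ballI allI impI)
  fix i assume "i \<in> I"
  then show "0 \<le> win_amount b bidder xs i
      - win_price J a bidder core_cuts xs (\<lambda>_. 0) (\<lambda>_. 1) i"
    using surplus_nonneg win_price_core_cut by simp
next
  fix k assume "k \<in> K"
  then show "b k \<le> core_cut b bidder xs \<rho> k + (win_amount b bidder xs (bidder k)
      - win_price J a bidder core_cuts xs (\<lambda>_. 0) (\<lambda>_. 1) (bidder k))"
    using win_price_core_cut bidder_in_bidders by (simp add: core_cut_def)
qed (use sum_core_cut_outcome in simp_all)

lemma core_cut_price_match:
  assumes bids_nonneg: "\<forall>k\<in>K. 0 \<le> b k" and "i \<in> I"
    and tight: "\<rho> i \<le> wval J K a bidder b (I - {i}) c - (\<Sum>i'\<in>I - {i}. win_amount b bidder xs i')"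
  obtains y where "aug_feasible J K c a bidder core_cuts y"
    and "\<forall>k\<in>y. bidder k \<noteq> i" and "\<forall>k\<in>y. core_cut b bidder xs \<rho> k \<le> b k"
    and "(\<Sum>k\<in>y. core_cut b bidder xs \<rho> k) = (\<Sum>k\<in>xs. core_cut b bidder xs \<rho> k)"
proof -
  obtain y where y: "feasible J K a bidder c y" "\<forall>k\<in>y. bidder k \<in> I - {i}"
    and opt: "(\<Sum>k\<in>y. b k) = wval J K a bidder b (I - {i}) c"
    by (rule wval_attained)
  have upper: "(\<Sum>k\<in>y. core_cut b bidder xs \<rho> k) \<le> (\<Sum>i\<in>I. \<rho> i)"
    using y(1) by (rule sum_core_cut_le)
  have "(\<Sum>i\<in>I. \<rho> i) = \<rho> i + (\<Sum>i'\<in>I - {i}. \<rho> i')"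
    using sum.remove[OF finite_bidders \<open>i \<in> I\<close>] .
  also have "\<dots> \<le> (\<Sum>k\<in>y. b k) - (\<Sum>i'\<in>I - {i}. win_amount b bidder xs i' - \<rho> i')"
    using tight opt by (simp add: sum_subtractf)
  also have "\<dots> \<le> (\<Sum>k\<in>y. core_cut b bidder xs \<rho> k)"
    using y by (intro sum_core_cut_ge) auto
  finally have lower: "(\<Sum>i\<in>I. \<rho> i) \<le> (\<Sum>k\<in>y. core_cut b bidder xs \<rho> k)" .
  show thesis
  proof
    show "aug_feasible J K c a bidder core_cuts y"
      unfolding aug_feasible_def using y(1) upper by simp
    show "\<forall>k\<in>y. bidder k \<noteq> i"
      using y(2) by blast
    show "\<forall>k\<in>y. core_cut b bidder xs \<rho> k \<le> b k"
      using y bids_nonneg surplus_nonneg feasible_subset_bids[OF y(1)]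
      by (auto simp: core_cut_def)
    show "(\<Sum>k\<in>y. core_cut b bidder xs \<rho> k) = (\<Sum>k\<in>xs. core_cut b bidder xs \<rho> k)"
      using upper lower sum_core_cut_outcome by simp
  qed
qed

lemma core_cut_pme:
  assumes "\<forall>k\<in>K. 0 \<le> b k"
    and "\<forall>i\<in>I. \<rho> i \<le> wval J K a bidder b (I - {i}) c - (\<Sum>i'\<in>I - {i}. win_amount b bidder xs i')"
  shows "pme I J K c a bidder b core_cuts xs (\<lambda>_. 0) (\<lambda>_. 1)"
  unfolding pme_def bid_price_single_cut
  using core_cut_walrasian core_cut_price_match[OF assms(1)] assms(2) by metis

lemma core_selecting_pme_linearizable:
  assumes "\<forall>k\<in>K. 0 \<le> b k"
    and "\<forall>i\<in>I. \<rho> i \<le> wval J K a bidder b (I - {i}) c - (\<Sum>i'\<in>I - {i}. win_amount b bidder xs i')"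
  shows "pme_linearizable I J K c a bidder b xs \<rho>"
  unfolding pme_linearizable_def
  using core_cut_valid core_cut_pme[OF assms] win_price_core_cut
  by (intro exI[of _ core_cuts]) auto

end

end

theorem corollary3:
  fixes I :: "'i set" and J :: "'j set" and K :: "'k set"
    and c :: "'j \<Rightarrow> nat" and a :: "'k \<Rightarrow> 'j \<Rightarrow> nat" and bidder :: "'k \<Rightarrow> 'i"
    and b :: "'k \<Rightarrow> real" and xs :: "'k set"
  assumes "finite I" and "finite J" and "finite K"
    and "\<forall>k\<in>K. bidder k \<in> I"
    and "\<forall>j\<in>J. c j \<ge> 1"
    and "\<forall>k\<in>K. \<forall>j\<in>J. a k j \<le> c j"
    and "\<forall>k\<in>K. b k \<ge> 0"
    and "feasible J K a bidder c xs"
    and "(\<Sum>k\<in>xs. b k) = wval J K a bidder b I c"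
  shows "(\<exists>cuts p q.
            (\<forall>l<length cuts. valid_cut J K c a bidder xs (fst (cuts ! l)) (snd (cuts ! l))) \<and>
            pme I J K c a bidder b cuts xs p q \<and>
            (\<forall>i\<in>I. win_price J a bidder cuts xs p q i = vcg I J K c a bidder b xs i))
         \<longleftrightarrow> mrc I J K c a bidder b xs (vcg I J K c a bidder b xs)"
proof -
  interpret auction_outcome I J K c a bidder b xs
    using assms by unfold_locales auto
  let ?vcg = "vcg I J K c a bidder b xs"
  have "pme_linearizable I J K c a bidder b xs ?vcg \<longleftrightarrow> core_selecting I J K c a bidder b xs ?vcg"
  proof
    assume "pme_linearizable I J K c a bidder b xs ?vcg"
    then show "core_selecting I J K c a bidder b xs ?vcg"
      unfolding pme_linearizable_def pme_def using walrasian_core_selecting by blast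
  next
    assume "core_selecting I J K c a bidder b xs ?vcg"
    then show "pme_linearizable I J K c a bidder b xs ?vcg"
      using core_selecting_pme_linearizable vcg_nonneg vcg_le_core_bound assms(7) by blast
  qed
  then show ?thesis
    unfolding pme_linearizable_def mrc_vcg_iff_core_selecting .
qed

end
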